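(* Let $\nu\in\mathbb{R}$, $n\ge 1$, and let $p_n(\underline{\theta})$ be any function of $\underline{\theta}=(\theta_1,\dots,\theta_n)$ that does not depend on $\underline{l}=(l_1,\dots,l_n)\in\{0,1\}^n$. Then $$K_n(\underline{\theta})=\sum_{l_1=0}^1\cdots\sum_{l_n=0}^1(-1)^{l_1+\dots+l_n}\prod_{1\le i<j\le n}\Big(1+(l_i-l_j)\frac{i\sin\pi\nu}{\sinh\theta_{ij}}\Big)p_n(\underline{\theta})$$ vanishes identically.
   Context: $\theta_{ij}=\theta_i-\theta_j$. *)

theory Defs
  imports "HOL-Analysis.Analysis"
begin

end

theory Submission
  imports Defs "HOL-Computational_Algebra.Polynomial"
begin

(* Put w = exp o theta and k = 2 i sin(pi nu), so that i sin(pi nu) / sinh(theta_a - theta_b)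
   = k w_a w_b / (w_a^2 - w_b^2) =: X_ab, and let S = {i. l_i = 1}. Since X is antisymmetric, the
   summand is (-1)^|S| times the product of 1 + X_ab over a in S, b not in S. This alternating sum
   over subsets vanishes by induction on the index set. Fix an index v and clear the denominators
   containing w_v: the result is a polynomial in x = w_v of degree at most 2(n - 1). It vanishes at
   x = 0, where every X_va is 0 and S cancels against S + {v}; and at x = +-w_j for each j <> v,
   by pairing S with S + {j}: at w_j the pairs cancel outright, at -w_j they add up to a multiple
   of the sum over the indices other than v and j, which is 0 by induction. With 2n - 1 roots the
   polynomial is zero, and at x = w_v it is a nonzero multiple of the sum. *)

(* With w = exp o theta and k = 2 i sin(pi nu) this is i sin(pi nu) / sinh(theta_a - theta_b)
   (divide_sinh_diff_eq_coupling). *)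
definition coupling :: "'a::field \<Rightarrow> ('b \<Rightarrow> 'a) \<Rightarrow> 'b \<Rightarrow> 'b \<Rightarrow> 'a" where
  "coupling k w a b = k * w a * w b / (w a ^ 2 - w b ^ 2)"

definition cut_product :: "'a::field \<Rightarrow> ('b \<Rightarrow> 'a) \<Rightarrow> 'b set \<Rightarrow> 'b set \<Rightarrow> 'a" where
  "cut_product k w V S = (\<Prod>a\<in>S. \<Prod>b\<in>V - S. 1 + coupling k w a b)"

(* K_n of the paper, indexed by S = {i. l_i = 1} (prod_pairs_sinh_eq_cut_product). *)
definition alternating_cut_sum :: "'a::field \<Rightarrow> ('b \<Rightarrow> 'a) \<Rightarrow> 'b set \<Rightarrow> 'a" where
  "alternating_cut_sum k w V = (\<Sum>S\<in>Pow V. (-1) ^ card S * cut_product k w V S)"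

(* At x = w u: the numerator of 1 + coupling k w b u over the common denominator
   coupling_numerator 0 w x b = w u^2 - w b^2 (one_plus_coupling_cleared). *)
definition coupling_numerator :: "'a::field \<Rightarrow> ('b \<Rightarrow> 'a) \<Rightarrow> 'a \<Rightarrow> 'b \<Rightarrow> 'a" where
  "coupling_numerator k w x b = x ^ 2 - w b ^ 2 - k * w b * x"

lemma coupling_swap: "coupling k w a b = coupling (- k) w b a"
proof -
  have "w b ^ 2 - w a ^ 2 = - (w a ^ 2 - w b ^ 2)" by simp
  then show ?thesis
    unfolding coupling_def
    by (simp only: divide_minus_right mult_minus_left mult_minus_right minus_divide_left minus_minus mult_ac)
qed

lemma coupling_antisym: "coupling k w b a = - coupling k w a b"
  unfolding coupling_swap[of k w b a] by (simp add: coupling_def)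

lemma coupling_numerator_minus: "coupling_numerator k w (- x) b = coupling_numerator (- k) w x b"
  by (simp add: coupling_numerator_def)

lemma coupling_numerator_self: "coupling_numerator k w (w j) j = - k * w j ^ 2"
  by (simp add: coupling_numerator_def power2_eq_square)

lemma one_plus_coupling_cleared:
  assumes "w a ^ 2 \<noteq> w u ^ 2"
  shows "(1 + coupling k w a u) * coupling_numerator 0 w (w u) a = coupling_numerator k w (w u) a"
proof -
  have "w a ^ 2 - w u ^ 2 \<noteq> 0" using assms by simp
  then show ?thesis unfolding coupling_def coupling_numerator_def by (simp add: field_simps)
qed

lemma sum_Pow_insert:
  assumes "finite R" "v \<notin> R"
  shows "(\<Sum>T\<in>Pow (insert v R). f T) = (\<Sum>T\<in>Pow R. f T + f (insert v T))"
proof -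
  have "(\<Sum>T\<in>Pow (insert v R). f T) = (\<Sum>T\<in>Pow R. f T) + (\<Sum>T\<in>insert v ` Pow R. f T)"
    unfolding Pow_insert by (rule sum.union_disjoint) (use assms in auto)
  also have "(\<Sum>T\<in>insert v ` Pow R. f T) = (\<Sum>T\<in>Pow R. f (insert v T))"
    by (rule sum.reindex_cong[where l="insert v"]) (use assms in \<open>auto simp: inj_on_def\<close>)
  finally show ?thesis by (simp add: sum.distrib)
qed

lemma cut_product_insert_outside:
  assumes "finite R" "j \<notin> R" "T \<subseteq> R" "\<forall>a\<in>R. w a ^ 2 \<noteq> w j ^ 2"
  shows "cut_product k w (insert j R) T * (\<Prod>a\<in>T. coupling_numerator 0 w (w j) a)
       = cut_product k w R T * (\<Prod>a\<in>T. coupling_numerator k w (w j) a)"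
proof -
  have fin: "finite T" "finite (R - T)" using assms finite_subset by auto
  have "insert j R - T = insert j (R - T)" using assms by auto
  then have "cut_product k w (insert j R) T = cut_product k w R T * (\<Prod>a\<in>T. 1 + coupling k w a j)"
    unfolding cut_product_def using assms fin by (simp add: prod.distrib[symmetric] mult.commute)
  moreover have "(\<Prod>a\<in>T. 1 + coupling k w a j) * (\<Prod>a\<in>T. coupling_numerator 0 w (w j) a)
      = (\<Prod>a\<in>T. coupling_numerator k w (w j) a)"
    unfolding prod.distrib[symmetric] using assms by (intro prod.cong one_plus_coupling_cleared) auto
  ultimately show ?thesis by (simp add: mult.assoc)
qed

lemma cut_product_insert_inside:
  assumes "finite R" "j \<notin> R" "T \<subseteq> R" "\<forall>b\<in>R. w b ^ 2 \<noteq> w j ^ 2"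
  shows "cut_product k w (insert j R) (insert j T) * (\<Prod>b\<in>R - T. coupling_numerator 0 w (w j) b)
       = cut_product k w R T * (\<Prod>b\<in>R - T. coupling_numerator (- k) w (w j) b)"
proof -
  have "insert j R - insert j T = R - T" using assms by auto
  then have "cut_product k w (insert j R) (insert j T)
      = cut_product k w R T * (\<Prod>b\<in>R - T. 1 + coupling (- k) w b j)"
    unfolding cut_product_def using assms finite_subset[OF assms(3)]
    by (subst prod.insert) (auto simp: mult.commute coupling_swap[of k])
  moreover have "(\<Prod>b\<in>R - T. 1 + coupling (- k) w b j) * (\<Prod>b\<in>R - T. coupling_numerator 0 w (w j) b)
      = (\<Prod>b\<in>R - T. coupling_numerator (- k) w (w j) b)"
    unfolding prod.distrib[symmetric] using assms by (intro prod.cong one_plus_coupling_cleared) auto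
  ultimately show ?thesis by (simp add: mult.assoc)
qed

definition coupling_numerator_poly :: "'a::field \<Rightarrow> ('b \<Rightarrow> 'a) \<Rightarrow> 'b \<Rightarrow> 'a poly" where
  "coupling_numerator_poly k w b = [:- (w b ^ 2), - (k * w b), 1:]"

lemma poly_coupling_numerator_poly [simp]:
  "poly (coupling_numerator_poly k w b) x = coupling_numerator k w x b"
  by (simp add: coupling_numerator_poly_def coupling_numerator_def algebra_simps power2_eq_square)

lemma degree_prod_coupling_numerator_poly:
  assumes "finite A"
  shows "degree (\<Prod>b\<in>A. coupling_numerator_poly k w b) \<le> 2 * card A"
proof -
  have "degree (\<Prod>b\<in>A. coupling_numerator_poly k w b) \<le> (\<Sum>b\<in>A. degree (coupling_numerator_poly k w b))"
    using degree_prod_sum_le[OF assms] by (simp add: comp_def)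
  also have "\<dots> \<le> (\<Sum>b\<in>A. 2)"
    by (rule sum_mono) (simp add: coupling_numerator_poly_def)
  finally show ?thesis by simp
qed

(* For v not in R, cleared_poly k w R k (- k) at w v is alternating_cut_sum k w (insert v R) with
   the denominators involving w v cleared (poly_cleared_poly_eq_alternating_cut_sum). The
   parameters k1, k2 let the same definition describe its values at - x (poly_cleared_poly_minus). *)
definition cleared_poly :: "'a::field \<Rightarrow> ('b \<Rightarrow> 'a) \<Rightarrow> 'b set \<Rightarrow> 'a \<Rightarrow> 'a \<Rightarrow> 'a poly" where
  "cleared_poly k w R k1 k2 = (\<Sum>S\<in>Pow R. smult ((-1) ^ card S * cut_product k w R S)
     ((\<Prod>a\<in>S. coupling_numerator_poly k1 w a) * (\<Prod>b\<in>R - S. coupling_numerator_poly 0 w b)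
      - (\<Prod>b\<in>R - S. coupling_numerator_poly k2 w b) * (\<Prod>a\<in>S. coupling_numerator_poly 0 w a)))"

lemma poly_cleared_poly:
  "poly (cleared_poly k w R k1 k2) x = (\<Sum>S\<in>Pow R. (-1) ^ card S * cut_product k w R S *
     ((\<Prod>a\<in>S. coupling_numerator k1 w x a) * (\<Prod>b\<in>R - S. coupling_numerator 0 w x b)
      - (\<Prod>b\<in>R - S. coupling_numerator k2 w x b) * (\<Prod>a\<in>S. coupling_numerator 0 w x a)))"
  by (simp add: cleared_poly_def poly_sum poly_prod)

lemma poly_cleared_poly_minus:
  "poly (cleared_poly k w R k1 k2) (- x) = poly (cleared_poly k w R (- k1) (- k2)) x"
  using coupling_numerator_minus[of _ w x] by (simp add: poly_cleared_poly)

lemma degree_cleared_poly: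
  assumes "finite R"
  shows "degree (cleared_poly k w R k1 k2) \<le> 2 * card R"
  unfolding cleared_poly_def
proof (intro degree_sum_le)
  fix S assume "S \<in> Pow R"
  then have fin: "finite S" "finite (R - S)" and card: "card S + card (R - S) = card R"
    using assms finite_subset card_Int_Diff[of R S] by (auto simp: Int_absorb1)
  have "degree ((\<Prod>a\<in>S. coupling_numerator_poly k' w a) * (\<Prod>b\<in>R - S. coupling_numerator_poly k'' w b))
      \<le> 2 * card R" for k' k''
  proof -
    have "degree ((\<Prod>a\<in>S. coupling_numerator_poly k' w a) * (\<Prod>b\<in>R - S. coupling_numerator_poly k'' w b))
        \<le> 2 * card S + 2 * card (R - S)"
      by (intro order.trans[OF degree_mult_le] add_mono degree_prod_coupling_numerator_poly fin)
    then show ?thesis using card by simp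
  qed
  then show "degree (smult ((-1) ^ card S * cut_product k w R S)
     ((\<Prod>a\<in>S. coupling_numerator_poly k1 w a) * (\<Prod>b\<in>R - S. coupling_numerator_poly 0 w b)
      - (\<Prod>b\<in>R - S. coupling_numerator_poly k2 w b) * (\<Prod>a\<in>S. coupling_numerator_poly 0 w a))) \<le> 2 * card R"
    by (intro order.trans[OF degree_smult_le] degree_diff_le) (simp_all add: mult.commute)
qed (use assms in simp)

lemma poly_cleared_poly_eq_alternating_cut_sum:
  assumes "finite R" "v \<notin> R" "\<forall>b\<in>R. w b ^ 2 \<noteq> w v ^ 2"
  shows "poly (cleared_poly k w R k (- k)) (w v)
       = (\<Prod>b\<in>R. coupling_numerator 0 w (w v) b) * alternating_cut_sum k w (insert v R)"
proof -
  let ?n = "\<lambda>k b. coupling_numerator k w (w v) b"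
  have "(\<Prod>b\<in>R. ?n 0 b) * alternating_cut_sum k w (insert v R)
      = (\<Sum>T\<in>Pow R. (-1) ^ card T * (\<Prod>b\<in>R. ?n 0 b) *
          (cut_product k w (insert v R) T - cut_product k w (insert v R) (insert v T)))"
    unfolding alternating_cut_sum_def sum_Pow_insert[OF assms(1,2)] sum_distrib_left
  proof (intro sum.cong refl)
    fix T assume "T \<in> Pow R"
    then have "finite T" "v \<notin> T" using assms(1,2) finite_subset by auto
    then show "(\<Prod>b\<in>R. ?n 0 b) * ((-1) ^ card T * cut_product k w (insert v R) T
          + (-1) ^ card (insert v T) * cut_product k w (insert v R) (insert v T))
        = (-1) ^ card T * (\<Prod>b\<in>R. ?n 0 b) *
          (cut_product k w (insert v R) T - cut_product k w (insert v R) (insert v T))"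
      by (simp add: algebra_simps)
  qed
  also have "\<dots> = poly (cleared_poly k w R k (- k)) (w v)"
    unfolding poly_cleared_poly
  proof (intro sum.cong refl)
    fix T assume "T \<in> Pow R"
    then have T: "T \<subseteq> R" by simp
    have split: "(\<Prod>b\<in>R. ?n 0 b) = (\<Prod>b\<in>R - T. ?n 0 b) * (\<Prod>a\<in>T. ?n 0 a)"
      using prod.subset_diff[OF T assms(1)] .
    show "(-1) ^ card T * (\<Prod>b\<in>R. ?n 0 b) *
          (cut_product k w (insert v R) T - cut_product k w (insert v R) (insert v T))
        = (-1) ^ card T * cut_product k w R T *
          ((\<Prod>a\<in>T. ?n k a) * (\<Prod>b\<in>R - T. ?n 0 b) - (\<Prod>b\<in>R - T. ?n (- k) b) * (\<Prod>a\<in>T. ?n 0 a))"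
      using cut_product_insert_outside[OF assms(1,2) T assms(3), of k]
        cut_product_insert_inside[OF assms(1,2) T assms(3), of k]
      unfolding split by (simp add: algebra_simps)
  qed
  finally show ?thesis ..
qed

(* Pair T with insert j T: at w j one half of each of the two summands contains the factor
   coupling_numerator 0 w (w j) j = 0. *)
lemma poly_cleared_poly_insert_at:
  assumes "finite R" "j \<notin> R" "\<forall>b\<in>R. w b ^ 2 \<noteq> w j ^ 2"
  shows "poly (cleared_poly k w (insert j R) k1 k2) (w j)
       = - (\<Sum>T\<in>Pow R. (-1) ^ card T * cut_product k w R T *
            (coupling_numerator k2 w (w j) j * ((\<Prod>a\<in>T. coupling_numerator k w (w j) a)
               * (\<Prod>b\<in>R - T. coupling_numerator k2 w (w j) b))
             + coupling_numerator k1 w (w j) j * ((\<Prod>b\<in>R - T. coupling_numerator (- k) w (w j) b)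
               * (\<Prod>a\<in>T. coupling_numerator k1 w (w j) a))))"
proof -
  let ?n = "\<lambda>k b. coupling_numerator k w (w j) b"
  have "poly (cleared_poly k w (insert j R) k1 k2) (w j) = (\<Sum>T\<in>Pow R.
      (-1) ^ card T * cut_product k w (insert j R) T *
        ((\<Prod>a\<in>T. ?n k1 a) * (\<Prod>b\<in>insert j R - T. ?n 0 b)
         - (\<Prod>b\<in>insert j R - T. ?n k2 b) * (\<Prod>a\<in>T. ?n 0 a))
    + (-1) ^ card (insert j T) * cut_product k w (insert j R) (insert j T) *
        ((\<Prod>a\<in>insert j T. ?n k1 a) * (\<Prod>b\<in>insert j R - insert j T. ?n 0 b)
         - (\<Prod>b\<in>insert j R - insert j T. ?n k2 b) * (\<Prod>a\<in>insert j T. ?n 0 a)))"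
    unfolding poly_cleared_poly by (rule sum_Pow_insert[OF assms(1,2)])
  also have "\<dots> = (\<Sum>T\<in>Pow R. - ((-1) ^ card T * cut_product k w R T *
            (?n k2 j * ((\<Prod>a\<in>T. ?n k a) * (\<Prod>b\<in>R - T. ?n k2 b))
             + ?n k1 j * ((\<Prod>b\<in>R - T. ?n (- k) b) * (\<Prod>a\<in>T. ?n k1 a)))))"
  proof (intro sum.cong refl)
    fix T assume "T \<in> Pow R"
    then have T: "T \<subseteq> R" and fin: "finite T" "finite (R - T)" and "j \<notin> T"
      using assms finite_subset by auto
    then have diff: "insert j R - T = insert j (R - T)" "insert j R - insert j T = R - T"
      using assms by auto
    have zero: "?n 0 j = 0" by (simp add: coupling_numerator_def)
    show "(-1) ^ card T * cut_product k w (insert j R) T *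
        ((\<Prod>a\<in>T. ?n k1 a) * (\<Prod>b\<in>insert j R - T. ?n 0 b)
         - (\<Prod>b\<in>insert j R - T. ?n k2 b) * (\<Prod>a\<in>T. ?n 0 a))
    + (-1) ^ card (insert j T) * cut_product k w (insert j R) (insert j T) *
        ((\<Prod>a\<in>insert j T. ?n k1 a) * (\<Prod>b\<in>insert j R - insert j T. ?n 0 b)
         - (\<Prod>b\<in>insert j R - insert j T. ?n k2 b) * (\<Prod>a\<in>insert j T. ?n 0 a))
      = - ((-1) ^ card T * cut_product k w R T *
            (?n k2 j * ((\<Prod>a\<in>T. ?n k a) * (\<Prod>b\<in>R - T. ?n k2 b))
             + ?n k1 j * ((\<Prod>b\<in>R - T. ?n (- k) b) * (\<Prod>a\<in>T. ?n k1 a))))"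
      using cut_product_insert_outside[OF assms(1,2) T assms(3), of k]
        cut_product_insert_inside[OF assms(1,2) T assms(3), of k]
      unfolding diff using fin \<open>j \<notin> T\<close> assms(2) by (simp add: zero algebra_simps)
  qed
  finally show ?thesis by (simp add: sum_negf)
qed

lemma poly_cleared_poly_zero: "poly (cleared_poly k w R k1 k2) 0 = 0"
  by (simp add: poly_cleared_poly coupling_numerator_def mult.commute)

lemma poly_cleared_poly_root:
  assumes "finite R" "j \<in> R" "inj_on (\<lambda>a. w a ^ 2) R"
  shows "poly (cleared_poly k w R k (- k)) (w j) = 0"
proof -
  obtain R0 where R: "R = insert j R0" "j \<notin> R0" using assms(2) by (meson mk_disjoint_insert)
  have "\<forall>b\<in>R0. w b ^ 2 \<noteq> w j ^ 2" using assms(3) R unfolding inj_on_def by blast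
  then show ?thesis using assms(1) R
    by (simp add: poly_cleared_poly_insert_at coupling_numerator_self algebra_simps)
qed

lemma poly_cleared_poly_minus_root:
  fixes w :: "'b \<Rightarrow> 'a::field"
  assumes "finite R" "j \<in> R" "inj_on (\<lambda>a. w a ^ 2) R"
  shows "poly (cleared_poly k w R k (- k)) (- w j)
       = k * w j ^ 2 * ((\<Prod>b\<in>R - {j}. coupling_numerator k w (w j) b)
                        - (\<Prod>b\<in>R - {j}. coupling_numerator (- k) w (w j) b))
         * alternating_cut_sum k w (R - {j})"
proof -
  define R0 where "R0 = R - {j}"
  have R: "R = insert j R0" "j \<notin> R0" "finite R0" using assms(1,2) unfolding R0_def by auto
  have "\<forall>b\<in>R0. w b ^ 2 \<noteq> w j ^ 2" using assms(3) R unfolding inj_on_def by blast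
  note at_j = poly_cleared_poly_insert_at[OF R(3,2) this]
  have "poly (cleared_poly k w R k (- k)) (- w j) = poly (cleared_poly k w R (- k) k) (w j)"
    by (simp add: poly_cleared_poly_minus)
  also have "\<dots> = (\<Sum>T\<in>Pow R0. k * w j ^ 2 * ((\<Prod>b\<in>R0. coupling_numerator k w (w j) b)
                        - (\<Prod>b\<in>R0. coupling_numerator (- k) w (w j) b)) * ((-1) ^ card T * cut_product k w R0 T))"
    unfolding R(1) at_j sum_negf[symmetric]
  proof (intro sum.cong refl)
    fix T assume "T \<in> Pow R0"
    then have "(\<Prod>a\<in>T. f a) * (\<Prod>b\<in>R0 - T. f b) = (\<Prod>b\<in>R0. f b)"
      and "(\<Prod>b\<in>R0 - T. f b) * (\<Prod>a\<in>T. f a) = (\<Prod>b\<in>R0. f b)" for f :: "'b \<Rightarrow> 'a"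
      using prod.subset_diff[of T R0 f] R(3) by (simp_all add: mult.commute)
    note merge = this
    show "- ((-1) ^ card T * cut_product k w R0 T *
            (coupling_numerator k w (w j) j * ((\<Prod>a\<in>T. coupling_numerator k w (w j) a)
               * (\<Prod>b\<in>R0 - T. coupling_numerator k w (w j) b))
             + coupling_numerator (- k) w (w j) j * ((\<Prod>b\<in>R0 - T. coupling_numerator (- k) w (w j) b)
               * (\<Prod>a\<in>T. coupling_numerator (- k) w (w j) a))))
        = k * w j ^ 2 * ((\<Prod>b\<in>R0. coupling_numerator k w (w j) b)
                        - (\<Prod>b\<in>R0. coupling_numerator (- k) w (w j) b)) * ((-1) ^ card T * cut_product k w R0 T)"
      unfolding merge by (simp add: coupling_numerator_self algebra_simps)
  qed
  finally show ?thesis unfolding alternating_cut_sum_def R0_def sum_distrib_left .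
qed

lemma card_insert_zero_signed_image:
  fixes w :: "'b \<Rightarrow> 'a::{idom, ring_char_0}"
  assumes "finite R" "\<forall>a\<in>R. w a \<noteq> 0" "inj_on (\<lambda>a. w a ^ 2) R"
  shows "card (insert 0 (w ` R \<union> uminus ` w ` R)) = Suc (2 * card R)"
proof -
  have inj: "inj_on w R" using inj_on_imageI2[of "\<lambda>x. x ^ 2" w R] assms(3) by (simp add: comp_def)
  have "w a \<noteq> - w b" if "a \<in> R" "b \<in> R" for a b
  proof
    assume eq: "w a = - w b"
    then have "w a ^ 2 = w b ^ 2" by simp
    then have "a = b" using inj_onD[OF assms(3), of a b] that by simp
    then have "w a + w a = 0" using eq by (simp add: eq_neg_iff_add_eq_0)
    then show False using assms(2) that by (simp add: mult_2[symmetric])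
  qed
  then have "w ` R \<inter> uminus ` w ` R = {}" by auto
  moreover have "0 \<notin> w ` R \<union> uminus ` w ` R" using assms(2) by auto
  moreover have "card (uminus ` w ` R) = card R"
    using inj by (simp add: card_image inj_on_image_iff)
  ultimately show ?thesis using assms(1) inj by (simp add: card_Un_disjoint card_image)
qed

theorem alternating_cut_sum_eq_0:
  fixes w :: "'b \<Rightarrow> 'a::field_char_0"
  assumes "finite V" "V \<noteq> {}" "\<forall>a\<in>V. w a \<noteq> 0" "inj_on (\<lambda>a. w a ^ 2) V"
  shows "alternating_cut_sum k w V = 0"
  using assms
proof (induction V rule: finite_psubset_induct)
  case (psubset V)
  obtain v R where V: "V = insert v R" "v \<notin> R"
    using psubset.prems(1) by (meson mk_disjoint_insert ex_in_conv)
  have R: "finite R" "\<forall>a\<in>R. w a \<noteq> 0" "inj_on (\<lambda>a. w a ^ 2) R" "\<forall>b\<in>R. w b ^ 2 \<noteq> w v ^ 2"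
    using psubset.hyps psubset.prems V by (auto simp: inj_on_insert image_iff)
  have "poly (cleared_poly k w R k (- k)) x = 0" if x: "x \<in> insert 0 (w ` R \<union> uminus ` w ` R)" for x
  proof -
    consider "x = 0" | j where "j \<in> R" "x = w j" | j where "j \<in> R" "x = - w j"
      using x by auto
    then show ?thesis
    proof cases
      case 1
      then show ?thesis by (simp add: poly_cleared_poly_zero)
    next
      case 2
      then show ?thesis using R by (simp add: poly_cleared_poly_root)
    next
      case 3
      show ?thesis
      proof (cases "R - {j} = {}")
        case True
        show ?thesis using 3 R by (simp add: poly_cleared_poly_minus_root True)
      next
        case False
        then have "alternating_cut_sum k w (R - {j}) = 0"
          using psubset.IH[of "R - {j}"] R V inj_on_subset[OF R(3)] by auto
        then show ?thesis using 3 R by (simp add: poly_cleared_poly_minus_root)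
      qed
    qed
  qed
  then have "cleared_poly k w R k (- k) = 0"
    using degree_cleared_poly[OF R(1), of k w k "- k"] card_insert_zero_signed_image[OF R(1-3)]
    by (intro poly_eqI_degree[where A = "insert 0 (w ` R \<union> uminus ` w ` R)"]) (auto simp: less_Suc_eq_le)
  then have "(\<Prod>b\<in>R. coupling_numerator 0 w (w v) b) * alternating_cut_sum k w V = 0"
    using poly_cleared_poly_eq_alternating_cut_sum[OF R(1) V(2) R(4), of k] V(1) by (metis poly_0)
  moreover have "(\<Prod>b\<in>R. coupling_numerator 0 w (w v) b) \<noteq> 0"
    using R by (auto simp: coupling_numerator_def)
  ultimately show ?case by simp
qed

lemma prod_ordered_pairs_eq_prod_cut:
  fixes X :: "'b::linorder \<Rightarrow> 'b \<Rightarrow> 'a::comm_ring_1"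
  assumes "finite V" "S \<subseteq> V" "\<And>a b. X b a = - X a b"
  shows "(\<Prod>(i, j)\<in>{(i, j) \<in> V \<times> V. i < j}. 1 + (of_bool (i \<in> S) - of_bool (j \<in> S)) * X i j)
       = (\<Prod>a\<in>S. \<Prod>b\<in>V - S. 1 + X a b)"
proof -
  define D where "D = {(i, j) \<in> V \<times> V. i < j}"
  define E where "E = {(i, j) \<in> V \<times> V. i \<noteq> j}"
  define \<phi> where "\<phi> a b = (if a \<in> S \<and> b \<notin> S then 1 + X a b else 1)" for a b
  have E: "E = D \<union> prod.swap ` D" "finite E"
    using assms(1) unfolding D_def E_def by (auto simp: image_iff neq_iff intro: finite_subset[of _ "V \<times> V"])
  have factor: "1 + (of_bool (i \<in> S) - of_bool (j \<in> S)) * X i j = \<phi> i j * \<phi> j i" for i j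
    using assms(3)[of i j] by (auto simp: \<phi>_def)
  have "(\<Prod>(i, j)\<in>D. 1 + (of_bool (i \<in> S) - of_bool (j \<in> S)) * X i j)
      = (\<Prod>(i, j)\<in>D. \<phi> i j) * (\<Prod>(i, j)\<in>D. \<phi> j i)"
    by (simp add: factor prod.distrib case_prod_unfold)
  also have "(\<Prod>(i, j)\<in>D. \<phi> j i) = (\<Prod>(i, j)\<in>prod.swap ` D. \<phi> i j)"
    by (simp add: prod.reindex comp_def case_prod_beta)
  also have "(\<Prod>(i, j)\<in>D. \<phi> i j) * \<dots> = (\<Prod>(i, j)\<in>E. \<phi> i j)"
    unfolding E(1) by (rule prod.union_disjoint[symmetric]) (use E in \<open>auto simp: D_def\<close>)
  also have "\<dots> = (\<Prod>(a, b)\<in>S \<times> (V - S). 1 + X a b)"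
    using E(2) by (intro prod.mono_neutral_cong_right) (use assms(2) in \<open>auto simp: E_def \<phi>_def split: if_splits\<close>)
  finally show ?thesis unfolding D_def prod.cartesian_product .
qed

lemma bij_betw_PiE_01_Pow: "bij_betw (\<lambda>l. {k \<in> V. l k = 1}) (V \<rightarrow>\<^sub>E {0, 1 :: nat}) (Pow V)"
proof (rule bij_betwI[where g = "\<lambda>S k. if k \<in> V then of_bool (k \<in> S) else undefined"])
  show "(\<lambda>l. {k \<in> V. l k = 1}) \<in> (V \<rightarrow>\<^sub>E {0, 1}) \<rightarrow> Pow V" by auto
  show "(\<lambda>S k. if k \<in> V then of_bool (k \<in> S) else undefined) \<in> Pow V \<rightarrow> V \<rightarrow>\<^sub>E {0, 1 :: nat}"
    by auto
  show "(\<lambda>k. if k \<in> V then of_bool (k \<in> {k \<in> V. l k = 1}) else undefined) = l"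
    if "l \<in> V \<rightarrow>\<^sub>E {0, 1}" for l
    using that by (force simp: fun_eq_iff PiE_def extensional_def)
  show "{k \<in> V. (if k \<in> V then of_bool (k \<in> S) else undefined) = (1::nat)} = S" if "S \<in> Pow V" for S
    using that by auto
qed

lemma sinh_diff_exp:
  fixes a b :: complex
  shows "sinh (a - b) = (exp a ^ 2 - exp b ^ 2) / (2 * exp a * exp b)"
  unfolding sinh_def exp_diff
  by (simp add: scaleR_conv_of_real exp_minus field_simps power2_eq_square exp_diff)

lemma divide_sinh_diff_eq_coupling:
  fixes c :: complex and \<theta> :: "'b \<Rightarrow> complex"
  shows "c / sinh (\<theta> a - \<theta> b) = coupling (2 * c) (\<lambda>k. exp (\<theta> k)) a b"
proof (cases "exp (\<theta> a) ^ 2 = exp (\<theta> b) ^ 2")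
  case False
  then have "exp (\<theta> a) ^ 2 - exp (\<theta> b) ^ 2 \<noteq> 0" by simp
  then show ?thesis unfolding sinh_diff_exp coupling_def by (simp add: field_simps)
qed (simp add: sinh_diff_exp coupling_def)

lemma sinh_diff_eq_0_iff:
  fixes a b :: complex
  shows "sinh (a - b) = 0 \<longleftrightarrow> exp a ^ 2 = exp b ^ 2"
  by (simp add: sinh_diff_exp)

lemma inj_on_exp_square_if_sinh_diff_nonzero:
  fixes \<theta> :: "'b::linorder \<Rightarrow> complex"
  assumes "\<And>i j. i \<in> V \<Longrightarrow> j \<in> V \<Longrightarrow> i < j \<Longrightarrow> sinh (\<theta> i - \<theta> j) \<noteq> 0"
  shows "inj_on (\<lambda>k. exp (\<theta> k) ^ 2) V"
proof (rule inj_onI, rule ccontr)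
  fix a b assume "a \<in> V" "b \<in> V" "exp (\<theta> a) ^ 2 = exp (\<theta> b) ^ 2" "a \<noteq> b"
  then show False using assms[of a b] assms[of b a] by (auto simp: sinh_diff_eq_0_iff neq_iff)
qed

lemma sum_PiE_01_eq_card:
  assumes "finite V" "l \<in> V \<rightarrow>\<^sub>E {0, 1 :: nat}"
  shows "(\<Sum>k\<in>V. l k) = card {k \<in> V. l k = 1}"
proof -
  have "(\<Sum>k\<in>V. l k) = (\<Sum>k\<in>V. of_bool (l k = 1))"
    using assms(2) by (intro sum.cong refl) auto
  also have "\<dots> = card {k \<in> V. l k = 1}"
    using assms(1) by (simp add: Int_def)
  finally show ?thesis .
qed

lemma prod_pairs_sinh_eq_cut_product:
  fixes \<theta> :: "nat \<Rightarrow> complex" and c :: complex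
  assumes "l \<in> {1..n} \<rightarrow>\<^sub>E {0, 1 :: nat}"
  shows "(\<Prod>(i, j) \<in> {(i, j). 1 \<le> i \<and> i < j \<and> j \<le> n}.
            1 + of_int (int (l i) - int (l j)) * (c / sinh (\<theta> i - \<theta> j)))
       = cut_product (2 * c) (\<lambda>k. exp (\<theta> k)) {1..n} {k \<in> {1..n}. l k = 1}"
proof -
  let ?V = "{1..n}" and ?S = "{k \<in> {1..n}. l k = 1}" and ?w = "\<lambda>k. exp (\<theta> k)"
  have "(\<Prod>(i, j) \<in> {(i, j). 1 \<le> i \<and> i < j \<and> j \<le> n}.
            1 + of_int (int (l i) - int (l j)) * (c / sinh (\<theta> i - \<theta> j)))
      = (\<Prod>(i, j) \<in> {(i, j) \<in> ?V \<times> ?V. i < j}.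
            1 + (of_bool (i \<in> ?S) - of_bool (j \<in> ?S)) * coupling (2 * c) ?w i j)"
  proof (rule prod.cong)
    fix x assume "x \<in> {(i, j) \<in> ?V \<times> ?V. i < j}"
    then obtain i j where x: "x = (i, j)" "i \<in> ?V" "j \<in> ?V" by auto
    then have "of_int (int (l i) - int (l j)) = (of_bool (i \<in> ?S) - of_bool (j \<in> ?S) :: complex)"
      using PiE_mem[OF assms x(2)] PiE_mem[OF assms x(3)] by auto
    then show "(case x of (i, j) \<Rightarrow> 1 + of_int (int (l i) - int (l j)) * (c / sinh (\<theta> i - \<theta> j)))
        = (case x of (i, j) \<Rightarrow> 1 + (of_bool (i \<in> ?S) - of_bool (j \<in> ?S)) * coupling (2 * c) ?w i j)"
      unfolding x divide_sinh_diff_eq_coupling by simp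
  qed auto
  also have "\<dots> = cut_product (2 * c) ?w ?V ?S"
    unfolding cut_product_def by (rule prod_ordered_pairs_eq_prod_cut) (auto intro: coupling_antisym)
  finally show ?thesis .
qed

theorem lemma1:
  fixes \<nu> :: real and n :: nat and \<theta> :: "nat \<Rightarrow> complex" and p :: "(nat \<Rightarrow> complex) \<Rightarrow> complex"
  assumes "n \<ge> 1"
    and "\<And>i j. 1 \<le> i \<Longrightarrow> i < j \<Longrightarrow> j \<le> n \<Longrightarrow> sinh (\<theta> i - \<theta> j) \<noteq> 0"
  shows "(\<Sum>l \<in> {1..n} \<rightarrow>\<^sub>E {0, 1::nat}.
            (-1) ^ (\<Sum>k=1..n. l k) *
            (\<Prod>(i, j) \<in> {(i, j). 1 \<le> i \<and> i < j \<and> j \<le> n}.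
               1 + (of_int (int (l i) - int (l j))) * (\<i> * of_real (sin (pi * \<nu>)) / sinh (\<theta> i - \<theta> j)))
            * p \<theta>) = 0"
proof -
  define V where "V = {1..n}"
  define w where "w = (\<lambda>k. exp (\<theta> k))"
  define c where "c = \<i> * complex_of_real (sin (pi * \<nu>))"
  define F where "F S = (-1) ^ card S * cut_product (2 * c) w V S" for S
  have "(\<Sum>l \<in> {1..n} \<rightarrow>\<^sub>E {0, 1::nat}.
            (-1) ^ (\<Sum>k=1..n. l k) *
            (\<Prod>(i, j) \<in> {(i, j). 1 \<le> i \<and> i < j \<and> j \<le> n}.
               1 + (of_int (int (l i) - int (l j))) * (\<i> * of_real (sin (pi * \<nu>)) / sinh (\<theta> i - \<theta> j)))
            * p \<theta>) = (\<Sum>l \<in> V \<rightarrow>\<^sub>E {0, 1::nat}. F {k \<in> V. l k = 1}) * p \<theta>"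
    unfolding sum_distrib_right F_def V_def c_def w_def
    by (intro sum.cong refl)
      (simp only: sum_PiE_01_eq_card[OF finite_atLeastAtMost] prod_pairs_sinh_eq_cut_product)
  also have "\<dots> = alternating_cut_sum (2 * c) w V * p \<theta>"
    unfolding alternating_cut_sum_def F_def[symmetric] sum.reindex_bij_betw[OF bij_betw_PiE_01_Pow] ..
  also have "\<dots> = 0"
    using alternating_cut_sum_eq_0[of V w] inj_on_exp_square_if_sinh_diff_nonzero[of V \<theta>] assms
    by (simp add: V_def w_def)
  finally show ?thesis .
qed

end
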